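(* Let $n\ge1$, let $\mathbf{A}\in\mathbb{R}^{n\times n}$ be symmetric positive semidefinite, $\mathbf{b}\in\mathbb{R}^n$, and let $h(\mathbf{x})=\sum_{i=1}^n\varphi(\mathbf{x}_i)$, where $\varphi:\mathbb{R}\to\mathbb{R}\cup\{+\infty\}$ is proper, lower semicontinuous and possibly nonconvex. Put $f(\mathbf{x})=\tfrac12\mathbf{x}^T\mathbf{A}\mathbf{x}+\mathbf{x}^T\mathbf{b}+h(\mathbf{x})$, and assume $f$ attains its minimum. Write $\mathbf{A}=\mathbf{L}+\mathbf{D}+\mathbf{L}^T$, where $\mathbf{D}$ is the diagonal part and $\mathbf{L}$ the strictly lower triangular part. Fix $\omega\in(0,2)$ and $\theta\ge0$. Set $\mathbf{B}=\mathbf{L}+\tfrac1\omega(\mathbf{D}+\theta\mathbf{I})$ and $\mathbf{C}=\mathbf{L}^T+\tfrac1\omega((\omega-1)\mathbf{D}-\theta\mathbf{I})$. Define $\delta=\min_i\big(\theta/\omega+\tfrac{1-\omega}{\omega}\mathbf{D}_{i,i}\big)$ and assume $\delta\in(0,\infty)$. Given $\mathbf{x}^0$, generate $\mathbf{x}^{k+1}$ from $\mathbf{x}^k$ as follows: set $\mathbf{u}=\mathbf{b}+\mathbf{C}\mathbf{x}^k$, and for $j=1,\dots,n$ successively let $\mathbf{x}^{k+1}_j$ be a global minimizer over $t\in\mathbb{R}$ of $\tfrac12\mathbf{B}_{j,j}t^2+(\mathbf{u}_j+\sum_{i<j}\mathbf{B}_{j,i}\mathbf{x}^{k+1}_i)t+\varphi(t)$.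 Assume these one-dimensional problems are solved globally. Then: (i) $f(\mathbf{x}^{k+1})-f(\mathbf{x}^k)\le-\tfrac\delta2\|\mathbf{x}^{k+1}-\mathbf{x}^k\|^2\le0$ for all $k$; (ii) the method is globally convergent: there exist $\mathbf{g}^k\in\mathbf{A}\mathbf{x}^k+\mathbf{b}+\partial h(\mathbf{x}^k)$ with $\mathbf{g}^k\to\mathbf{0}$ as $k\to\infty$.
   Context: $\|\cdot\|$ is the Euclidean norm. For nonconvex $h$, $\partial h$ denotes the (limiting) subdifferential. *)

theory Defs
  imports "HOL-Analysis.Analysis"
begin

definition proper_fun :: "('a \<Rightarrow> ereal) \<Rightarrow> bool" where
  "proper_fun g \<longleftrightarrow> (\<forall>x. g x \<noteq> -\<infinity>) \<and> (\<exists>x. g x \<noteq> \<infinity>)"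

definition lsc_fun :: "('a::topological_space \<Rightarrow> ereal) \<Rightarrow> bool" where
  "lsc_fun g \<longleftrightarrow> (\<forall>x. g x \<le> Liminf (at x) g)"

definition frechet_subdiff :: "('a::real_inner \<Rightarrow> ereal) \<Rightarrow> 'a \<Rightarrow> 'a set" where
  "frechet_subdiff g x = {v. \<bar>g x\<bar> \<noteq> \<infinity> \<and>
     Liminf (at x) (\<lambda>y. (g y - g x - ereal (v \<bullet> (y - x))) / ereal (norm (y - x))) \<ge> 0}"

definition limiting_subdiff :: "('a::real_inner \<Rightarrow> ereal) \<Rightarrow> 'a \<Rightarrow> 'a set" where
  "limiting_subdiff g x = {v. \<exists>xs vs. xs \<longlonglongrightarrow> x \<and> (\<lambda>k. g (xs k)) \<longlonglongrightarrow> g x \<and>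
     (\<forall>k. vs k \<in> frechet_subdiff g (xs k)) \<and> vs \<longlonglongrightarrow> v}"

definition lowpart :: "real^('n::{finite,linorder})^('n::{finite,linorder}) \<Rightarrow> real^('n::{finite,linorder})^('n::{finite,linorder})" where
  "lowpart A = (\<chi> i j. if j < i then A$i$j else 0)"

definition diagpart :: "real^('n::finite)^'n \<Rightarrow> real^'n^'n" where
  "diagpart A = (\<chi> i j. if i = j then A$i$j else 0)"

definition sepfun :: "(real \<Rightarrow> ereal) \<Rightarrow> real^'n::finite \<Rightarrow> ereal" where
  "sepfun phi x = (\<Sum>i\<in>UNIV. phi (x$i))"

definition objf :: "real^('n::finite)^'n \<Rightarrow> real^'n \<Rightarrow> (real \<Rightarrow> ereal) \<Rightarrow> real^'n \<Rightarrow> ereal" where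
  "objf A b phi x = ereal (1/2 * (x \<bullet> (A *v x)) + x \<bullet> b) + sepfun phi x"

end

theory Submission
  imports Defs
begin

(* One sweep x |-> y solves the scalar problems with the splitting A = B + C, where B is lower
   and C upper triangular. Comparing each new coordinate y_j with the old x_j and summing gives
   an inequality whose quadratic parts differ from f by exactly -1/2 (y - x)' diag(C) (y - x):
   off the diagonal B and C are transposes of each other, so their quadratic forms cancel.
   Since -C_jj >= delta, f drops by at least delta/2 |y - x|^2, and as f is bounded below the
   steps are square summable, hence tend to zero.
   Because every scalar problem is solved globally, its optimality yields a quadratic minorant
   of h at y with slope -(B y + C x + b), a Frechet subgradient. Adding A y + b = B y + C y + b
   leaves the residual C (y - x), which tends to zero. *)

lemma frechet_subdiff_subset_limiting_subdiff:
  "frechet_subdiff g x \<subseteq> limiting_subdiff g x"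
  unfolding limiting_subdiff_def by (fastforce intro: exI[of _ "\<lambda>_. x"])

lemma frechet_subdiff_of_quadratic_minorant:
  fixes g :: "'a::real_inner \<Rightarrow> ereal"
  assumes gy: "g y = ereal c"
    and minorant: "\<And>z. ereal (c + v \<bullet> (z - y) - M * (norm (z - y))\<^sup>2) \<le> g z"
  shows "v \<in> frechet_subdiff g y"
proof -
  let ?F = "\<lambda>z. (g z - g y - ereal (v \<bullet> (z - y))) / ereal (norm (z - y))"
  have bound: "ereal (- M * norm (z - y)) \<le> ?F z" if "z \<noteq> y" for z
  proof -
    have n: "norm (z - y) > 0" using that by simp
    show ?thesis
    proof (cases "g z")
      case (real r)
      have "c + v \<bullet> (z - y) - M * (norm (z - y))\<^sup>2 \<le> r"
        using minorant[of z] real by simp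
      then have "- M * norm (z - y) \<le> (r - c - v \<bullet> (z - y)) / norm (z - y)"
        using n by (simp add: le_divide_eq power2_eq_square algebra_simps)
      then show ?thesis using real n by (simp add: gy)
    qed (use n minorant[of z] gy in auto)
  qed
  have "((\<lambda>z. - M * norm (z - y)) \<longlongrightarrow> 0) (at y)"
    by (auto intro!: tendsto_eq_intros)
  then have lim: "((\<lambda>z. ereal (- M * norm (z - y))) \<longlongrightarrow> 0) (at y)"
    by (simp add: lim_ereal zero_ereal_def)
  have "0 \<le> Liminf (at y) ?F"
  proof (unfold le_Liminf_iff, intro allI impI)
    fix C :: ereal
    assume "C < 0"
    with lim have "eventually (\<lambda>z. C < ereal (- M * norm (z - y))) (at y)"
      by (rule order_tendstoD(1))
    moreover have "eventually (\<lambda>z. ereal (- M * norm (z - y)) \<le> ?F z) (at y)"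
      using bound by (simp add: eventually_at_filter)
    ultimately show "eventually (\<lambda>z. C < ?F z) (at y)"
      by eventually_elim (rule less_le_trans)
  qed
  then show ?thesis
    unfolding frechet_subdiff_def using gy by simp
qed

lemma quadratic_minorant_at_minimizer:
  fixes \<beta> c p r s t M :: real
  assumes min: "1/2 * \<beta> * s\<^sup>2 + c * s + p \<le> 1/2 * \<beta> * t\<^sup>2 + c * t + r" and "\<beta> \<le> M"
  shows "p - (\<beta> * s + c) * (t - s) - M/2 * (t - s)\<^sup>2 \<le> r"
proof -
  have "(1/2 * \<beta> * t\<^sup>2 + c * t) - (1/2 * \<beta> * s\<^sup>2 + c * s) = (\<beta> * s + c) * (t - s) + \<beta>/2 * (t - s)\<^sup>2"
    by (simp add: power2_eq_square algebra_simps)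
  moreover have "\<beta>/2 * (t - s)\<^sup>2 \<le> M/2 * (t - s)\<^sup>2"
    using \<open>\<beta> \<le> M\<close> by (simp add: mult_right_mono)
  ultimately show ?thesis using min by linarith
qed

lemma summable_decrements_of_bounded_below:
  fixes R e :: "nat \<Rightarrow> real"
  assumes dec: "\<And>k. R (Suc k) + e k \<le> R k" and nonneg: "\<And>k. 0 \<le> e k"
    and bounded: "\<And>k. m \<le> R k"
  shows "summable e"
proof (rule summableI_nonneg_bounded[where x="R 0 - m"])
  have telescope: "R n + sum e {..<n} \<le> R 0" for n
    by (induction n) (use dec in \<open>auto intro: order_trans[rotated]\<close>)
  show "sum e {..<n} \<le> R 0 - m" for n
    using telescope[of n] bounded[of n] by linarith
qed (rule nonneg)

lemma sufficient_decrease_steps_tendsto_zero: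
  fixes F :: "nat \<Rightarrow> ereal" and x :: "nat \<Rightarrow> 'a::real_normed_vector"
  assumes dec: "\<And>k. F (Suc k) - F k \<le> ereal (- c * (norm (x (Suc k) - x k))\<^sup>2)"
    and c: "c > 0" and bounded: "\<And>k. m \<le> F k" and m: "m \<noteq> -\<infinity>"
  shows "(\<lambda>k. x (Suc k) - x k) \<longlonglongrightarrow> 0"
proof -
  have fin: "\<bar>F (Suc k)\<bar> \<noteq> \<infinity>" for k
    using dec[of k] bounded[of "Suc k"] m by auto
  define R where "R k = real_of_ereal (F (Suc k))" for k
  define e where "e k = c * (norm (x (Suc (Suc k)) - x (Suc k)))\<^sup>2" for k
  have F: "F (Suc k) = ereal (R k)" for k
    unfolding R_def using fin by (simp add: ereal_real')
  have "R (Suc k) + e k \<le> R k" for k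
    using dec[of "Suc k"] unfolding F e_def by simp
  moreover have "real_of_ereal m \<le> R k" for k
    using bounded[of "Suc k"] m unfolding F by (cases m) auto
  ultimately have "summable e"
    using c by (intro summable_decrements_of_bounded_below[of R e "real_of_ereal m"]) (auto simp: e_def)
  then have "summable (\<lambda>k. (norm (x (Suc (Suc k)) - x (Suc k)))\<^sup>2)"
    using c unfolding e_def by simp
  then have "(\<lambda>k. (norm (x (Suc (Suc k)) - x (Suc k)))\<^sup>2) \<longlonglongrightarrow> 0"
    by (rule summable_LIMSEQ_zero)
  then have "(\<lambda>k. norm (x (Suc (Suc k)) - x (Suc k))) \<longlonglongrightarrow> 0"
    using tendsto_real_sqrt by fastforce
  then have "(\<lambda>k. x (Suc (Suc k)) - x (Suc k)) \<longlonglongrightarrow> 0"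
    by (rule tendsto_norm_zero_cancel)
  then show ?thesis
    by (rule LIMSEQ_imp_Suc[where f="\<lambda>k. x (Suc k) - x k"])
qed

lemma inner_transpose_mult_self:
  fixes M :: "real^'n^'n"
  shows "d \<bullet> (transpose M *v d) = d \<bullet> (M *v d)"
  by (metis dot_lmul_matrix inner_commute transpose_matrix_vector)

lemma inner_diagpart_mult_self:
  fixes M :: "real^'n::finite^'n"
  shows "d \<bullet> (diagpart M *v d) = (\<Sum>j\<in>UNIV. M$j$j * (d$j)\<^sup>2)"
proof -
  have "(diagpart M *v d)$i = M$i$i * d$i" for i
    by (simp add: matrix_vector_mult_def diagpart_def if_distrib[where f="\<lambda>a. a * _"] cong: if_cong)
  then show ?thesis
    by (simp add: inner_vec_def power2_eq_square mult_ac)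
qed

lemma inner_diagpart_mult_self_le:
  fixes M :: "real^'n::finite^'n"
  assumes "\<And>j. M$j$j \<le> c"
  shows "d \<bullet> (diagpart M *v d) \<le> c * (norm d)\<^sup>2"
proof -
  have "d \<bullet> (diagpart M *v d) \<le> (\<Sum>j\<in>UNIV. c * (d$j)\<^sup>2)"
    unfolding inner_diagpart_mult_self by (intro sum_mono mult_right_mono assms) simp
  also have "\<dots> = c * (norm d)\<^sup>2"
    unfolding power2_norm_eq_inner inner_vec_def by (simp add: sum_distrib_left power2_eq_square)
  finally show ?thesis .
qed

lemma symmetric_quadratic_form_diff:
  fixes A :: "real^'n::finite^'n"
  assumes "transpose A = A"
  shows "x \<bullet> (A *v x) = y \<bullet> (A *v y) - 2 * ((y - x) \<bullet> (A *v y)) + (y - x) \<bullet> (A *v (y - x))"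
proof -
  have "y \<bullet> (A *v (y - x)) = (y - x) \<bullet> (A *v y)"
    by (metis assms inner_commute dot_lmul_matrix transpose_matrix_vector)
  then show ?thesis
    by (simp add: matrix_vector_mult_diff_distrib inner_diff_left inner_diff_right)
qed

definition lower_triangular :: "real^('n::{finite,linorder})^('n::{finite,linorder}) \<Rightarrow> bool" where
  "lower_triangular M \<longleftrightarrow> (\<forall>i j. i < j \<longrightarrow> M$i$j = 0)"

definition upper_triangular :: "real^('n::{finite,linorder})^('n::{finite,linorder}) \<Rightarrow> bool" where
  "upper_triangular M \<longleftrightarrow> (\<forall>i j. j < i \<longrightarrow> M$i$j = 0)"

lemma lower_triangular_mult_component:
  fixes B :: "real^('n::{finite,linorder})^('n::{finite,linorder})"
  assumes "lower_triangular B"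
  shows "(B *v y)$j = B$j$j * y$j + (\<Sum>i\<in>{i. i < j}. B$j$i * y$i)"
proof -
  have univ: "(UNIV::'n set) = insert j ({..<j} \<union> {j<..})"
    using less_linear by auto
  have "(B *v y)$j = B$j$j * y$j + (\<Sum>i\<in>{..<j}. B$j$i * y$i) + (\<Sum>i\<in>{j<..}. B$j$i * y$i)"
    unfolding matrix_vector_mult_def by (subst univ, subst sum.insert, simp_all, subst sum.union_disjoint) auto
  moreover have "(\<Sum>i\<in>{j<..}. B$j$i * y$i) = 0"
    using assms by (simp add: lower_triangular_def)
  ultimately show ?thesis
    by (simp add: lessThan_def)
qed

lemma triangular_split_skew_part:
  fixes A B C :: "real^('n::{finite,linorder})^('n::{finite,linorder})"
  assumes symA: "transpose A = A" and split: "A = B + C"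
    and B: "lower_triangular B" and C: "upper_triangular C"
  shows "(B - C) + transpose (B - C) = 2 *\<^sub>R (diagpart B - diagpart C)"
proof -
  have sym: "B$i$j + C$i$j = B$j$i + C$j$i" for i j
    using symA unfolding split by (auto simp: transpose_def vec_eq_iff)
  have Bz: "B$i$j = 0" and Cz: "C$j$i = 0" if "i < j" for i j
    using B C that by (auto simp: lower_triangular_def upper_triangular_def)
  show ?thesis
    unfolding vec_eq_iff
  proof (intro allI)
    fix i j :: 'n
    consider "i < j" | "i = j" | "j < i" using less_linear by blast
    then show "((B - C) + transpose (B - C))$i$j = (2 *\<^sub>R (diagpart B - diagpart C))$i$j"
      using sym[of i j] Bz[of i j] Cz[of i j] Bz[of j i] Cz[of j i]
      by cases (auto simp: diagpart_def transpose_def)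
  qed
qed

lemma objf_neq_MInfty:
  assumes "proper_fun phi"
  shows "objf A b phi z \<noteq> -\<infinity>"
proof -
  have "(\<Sum>j\<in>S. phi (z$j)) \<noteq> -\<infinity>" for S
    using assms unfolding proper_fun_def by (induction S rule: infinite_finite_induct) auto
  then show ?thesis
    unfolding objf_def sepfun_def by simp
qed

lemma objf_eq_ereal:
  assumes "\<And>j. \<bar>phi (z$j)\<bar> \<noteq> \<infinity>"
  shows "objf A b phi z = ereal (1/2 * (z \<bullet> (A *v z)) + z \<bullet> b + (\<Sum>j\<in>UNIV. real_of_ereal (phi (z$j))))"
proof -
  have "sepfun phi z = (\<Sum>j\<in>UNIV. ereal (real_of_ereal (phi (z$j))))"
    unfolding sepfun_def using assms by (simp add: ereal_real')
  then show ?thesis unfolding objf_def by simp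
qed

(* The scalar problem for coordinate j of a sweep from x to y; the coordinates i < j of y are
   already updated, and b + C x is the vector u of the paper. *)
definition coord_quad ::
    "real^('n::{finite,linorder})^('n::{finite,linorder}) \<Rightarrow> real^('n::{finite,linorder})^('n::{finite,linorder})
     \<Rightarrow> real^('n::{finite,linorder}) \<Rightarrow> real^('n::{finite,linorder}) \<Rightarrow> real^('n::{finite,linorder})
     \<Rightarrow> 'n \<Rightarrow> real \<Rightarrow> real" where
  "coord_quad B C b x y j s = 1/2 * B$j$j * s\<^sup>2 + ((b + C *v x)$j + (\<Sum>i\<in>{i. i < j}. B$j$i * y$i)) * s"

definition gauss_seidel_step ::
    "real^('n::{finite,linorder})^('n::{finite,linorder}) \<Rightarrow> real^('n::{finite,linorder})^('n::{finite,linorder})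
     \<Rightarrow> real^('n::{finite,linorder}) \<Rightarrow> (real \<Rightarrow> ereal) \<Rightarrow> real^('n::{finite,linorder})
     \<Rightarrow> real^('n::{finite,linorder}) \<Rightarrow> bool" where
  "gauss_seidel_step B C b phi x y \<longleftrightarrow>
     (\<forall>j t. ereal (coord_quad B C b x y j (y$j)) + phi (y$j) \<le> ereal (coord_quad B C b x y j t) + phi t)"

lemma gauss_seidel_step_finite:
  assumes "gauss_seidel_step B C b phi x y" "proper_fun phi"
  shows "phi (y$j) \<noteq> \<infinity>"
proof
  assume inf: "phi (y$j) = \<infinity>"
  obtain t where t: "phi t \<noteq> \<infinity>" "phi t \<noteq> -\<infinity>"
    using assms(2) unfolding proper_fun_def by blast
  have "\<infinity> \<le> ereal (coord_quad B C b x y j t) + phi t"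
    using assms(1) inf unfolding gauss_seidel_step_def by (metis ereal_plus_eq_PInfty)
  with t show False by (cases "phi t") auto
qed

lemma sum_coord_quad_diff:
  fixes B C :: "real^('n::{finite,linorder})^('n::{finite,linorder})"
  assumes "lower_triangular B"
  shows "(\<Sum>j\<in>UNIV. coord_quad B C b x y j (y$j) - coord_quad B C b x y j (x$j))
    = (y - x) \<bullet> (B *v y + C *v x + b) - 1/2 * ((y - x) \<bullet> (diagpart B *v (y - x)))"
proof -
  have "coord_quad B C b x y j (y$j) - coord_quad B C b x y j (x$j)
      = (y$j - x$j) * (B *v y + C *v x + b)$j - 1/2 * (B$j$j * (y$j - x$j)\<^sup>2)" for j
    unfolding coord_quad_def
    by (simp add: lower_triangular_mult_component[OF assms] power2_eq_square algebra_simps)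
  then show ?thesis
    unfolding inner_diagpart_mult_self by (simp add: inner_vec_def sum_subtractf sum_distrib_left)
qed

lemma gauss_seidel_quadratic_gap:
  fixes A B C :: "real^('n::{finite,linorder})^('n::{finite,linorder})"
  assumes symA: "transpose A = A" and split: "A = B + C"
    and B: "lower_triangular B" and C: "upper_triangular C"
  shows "(\<Sum>j\<in>UNIV. coord_quad B C b x y j (y$j) - coord_quad B C b x y j (x$j))
      - ((1/2 * (y \<bullet> (A *v y)) + y \<bullet> b) - (1/2 * (x \<bullet> (A *v x)) + x \<bullet> b))
    = - 1/2 * ((y - x) \<bullet> (diagpart C *v (y - x)))"
proof -
  define d where "d = y - x"
  have skew: "d \<bullet> ((B - C) *v d) = d \<bullet> ((diagpart B - diagpart C) *v d)"
  proof -
    have "2 * (d \<bullet> ((B - C) *v d)) = d \<bullet> (((B - C) + transpose (B - C)) *v d)"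
      using inner_transpose_mult_self[of d "B - C"]
      by (simp add: matrix_vector_mult_add_rdistrib inner_add_right del: transpose_matrix_vector)
    also have "\<dots> = 2 * (d \<bullet> ((diagpart B - diagpart C) *v d))"
      by (simp add: triangular_split_skew_part[OF assms] flip: scaleR_matrix_vector_assoc)
    finally show ?thesis by simp
  qed
  have quad: "1/2 * (y \<bullet> (A *v y)) - 1/2 * (x \<bullet> (A *v x)) = d \<bullet> (A *v y) - 1/2 * (d \<bullet> (A *v d))"
    using symmetric_quadratic_form_diff[OF symA, of x y] unfolding d_def by linarith
  have x: "x = y - d" by (simp add: d_def)
  have lin: "d \<bullet> (B *v y + C *v x + b) - d \<bullet> (A *v y) - d \<bullet> b = - (d \<bullet> (C *v d))"
    unfolding x split
    by (simp add: matrix_vector_mult_add_rdistrib matrix_vector_mult_diff_distrib inner_add_right inner_diff_right)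
  have "d \<bullet> (A *v d) - 2 * (d \<bullet> (C *v d)) = d \<bullet> (diagpart B *v d) - d \<bullet> (diagpart C *v d)"
    using skew unfolding split
    by (simp add: matrix_vector_mult_add_rdistrib matrix_vector_mult_diff_rdistrib inner_add_right inner_diff_right)
  moreover have "y \<bullet> b - x \<bullet> b = d \<bullet> b"
    by (simp add: d_def inner_diff_left)
  ultimately show ?thesis
    unfolding sum_coord_quad_diff[OF B] d_def[symmetric] using quad lin by linarith
qed

lemma gauss_seidel_step_descent:
  fixes A B C :: "real^('n::{finite,linorder})^('n::{finite,linorder})"
  assumes symA: "transpose A = A" and split: "A = B + C"
    and B: "lower_triangular B" and C: "upper_triangular C"
    and step: "gauss_seidel_step B C b phi x y" and proper: "proper_fun phi"
    and diagC: "\<And>j. C$j$j \<le> - \<delta>"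
  shows "objf A b phi y - objf A b phi x \<le> ereal (- \<delta> / 2 * (norm (y - x))\<^sup>2)"
proof -
  have ninf: "phi t \<noteq> -\<infinity>" for t
    using proper unfolding proper_fun_def by blast
  have fin_y: "\<bar>phi (y$j)\<bar> \<noteq> \<infinity>" for j
    using gauss_seidel_step_finite[OF step proper] ninf by (cases "phi (y$j)") auto
  show ?thesis
  proof (cases "\<exists>j. phi (x$j) = \<infinity>")
    case True
    then have "objf A b phi x = \<infinity>"
      unfolding objf_def sepfun_def by (simp add: sum_Pinfty)
    then show ?thesis
      using objf_eq_ereal[of phi y, OF fin_y] by simp
  next
    case False
    then have fin_x: "\<bar>phi (x$j)\<bar> \<noteq> \<infinity>" for j
      using ninf by (cases "phi (x$j)") auto
    define q where "q j s = coord_quad B C b x y j s" for j s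
    define r where "r z j = real_of_ereal (phi (z$j))" for z :: "real^('n::{finite,linorder})" and j
    have "q j (y$j) + r y j \<le> q j (x$j) + r x j" for j
      using step fin_x[of j] fin_y[of j]
      unfolding gauss_seidel_step_def q_def r_def by (metis ereal_real' plus_ereal.simps(1) ereal_less_eq(3))
    then have "(\<Sum>j\<in>UNIV. q j (y$j) - q j (x$j)) + (\<Sum>j\<in>UNIV. r y j) - (\<Sum>j\<in>UNIV. r x j) \<le> 0"
      using sum_mono[of UNIV "\<lambda>j. q j (y$j) + r y j" "\<lambda>j. q j (x$j) + r x j"]
      by (simp add: sum.distrib sum_subtractf)
    then show ?thesis
      using gauss_seidel_quadratic_gap[OF symA split B C, of b x y]
        inner_diagpart_mult_self_le[of C "- \<delta>" "y - x", OF diagC]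
      unfolding objf_eq_ereal[of phi x, OF fin_x] objf_eq_ereal[of phi y, OF fin_y] q_def r_def by simp
  qed
qed

lemma gauss_seidel_step_subgradient:
  fixes B C :: "real^('n::{finite,linorder})^('n::{finite,linorder})"
  assumes B: "lower_triangular B"
    and step: "gauss_seidel_step B C b phi x y" and proper: "proper_fun phi"
  shows "- (B *v y + C *v x + b) \<in> frechet_subdiff (sepfun phi) y"
proof -
  define v where "v = - (B *v y + C *v x + b)"
  define M where "M = (\<Sum>j\<in>UNIV. \<bar>B$j$j\<bar>)"
  define r where "r j = real_of_ereal (phi (y$j))" for j
  have ninf: "phi t \<noteq> -\<infinity>" for t
    using proper unfolding proper_fun_def by blast
  have phi_y: "phi (y$j) = ereal (r j)" for j
    using gauss_seidel_step_finite[OF step proper] ninf unfolding r_def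
    by (cases "phi (y$j)") auto
  have coord: "ereal (r j + v$j * (t - y$j) - M/2 * (t - y$j)\<^sup>2) \<le> phi t" for j t
  proof (cases "phi t")
    case (real p)
    define c where "c = (b + C *v x)$j + (\<Sum>i\<in>{i. i < j}. B$j$i * y$i)"
    have "B$j$j \<le> M"
      using member_le_sum[of j UNIV "\<lambda>j. \<bar>B$j$j\<bar>"] unfolding M_def by simp
    moreover have "ereal (coord_quad B C b x y j (y$j)) + phi (y$j) \<le> ereal (coord_quad B C b x y j t) + phi t"
      using step unfolding gauss_seidel_step_def by blast
    then have "1/2 * B$j$j * (y$j)\<^sup>2 + c * y$j + r j \<le> 1/2 * B$j$j * t\<^sup>2 + c * t + p"
      unfolding coord_quad_def c_def by (simp add: phi_y real)
    ultimately have "r j - (B$j$j * y$j + c) * (t - y$j) - M/2 * (t - y$j)\<^sup>2 \<le> p"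
      by (intro quadratic_minorant_at_minimizer)
    moreover have "v$j = - (B$j$j * y$j + c)"
      unfolding v_def c_def by (simp add: lower_triangular_mult_component[OF B])
    ultimately show ?thesis
      using real by (simp only: ereal_less_eq(3))
  qed (use ninf in auto)
  have "ereal ((\<Sum>j\<in>UNIV. r j) + v \<bullet> (z - y) - M/2 * (norm (z - y))\<^sup>2) \<le> sepfun phi z" for z
  proof -
    have "ereal ((\<Sum>j\<in>UNIV. r j) + v \<bullet> (z - y) - M/2 * (norm (z - y))\<^sup>2)
        = (\<Sum>j\<in>UNIV. ereal (r j + v$j * (z$j - y$j) - M/2 * (z$j - y$j)\<^sup>2))"
      unfolding power2_norm_eq_inner
      by (simp add: inner_vec_def sum.distrib sum_subtractf sum_distrib_left power2_eq_square)
    also have "\<dots> \<le> sepfun phi z"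
      unfolding sepfun_def using coord by (intro sum_mono) simp
    finally show ?thesis .
  qed
  moreover have "sepfun phi y = ereal (\<Sum>j\<in>UNIV. r j)"
    unfolding sepfun_def phi_y by simp
  ultimately show ?thesis
    unfolding v_def[symmetric] by (intro frechet_subdiff_of_quadratic_minorant[where M="M/2"])
qed

lemma gauss_seidel_subgradients_tendsto_zero:
  fixes A B C :: "real^('n::{finite,linorder})^('n::{finite,linorder})"
  assumes symA: "transpose A = A" and split: "A = B + C"
    and B: "lower_triangular B" and C: "upper_triangular C"
    and steps: "\<And>k. gauss_seidel_step B C b phi (x k) (x (Suc k))" and proper: "proper_fun phi"
    and diagC: "\<And>j. C$j$j \<le> - \<delta>" and "\<delta> > 0"
    and bounded: "\<And>y. m \<le> objf A b phi y" and "m \<noteq> -\<infinity>"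
  shows "\<exists>g. (\<forall>k\<ge>1. g k - (A *v x k + b) \<in> limiting_subdiff (sepfun phi) (x k)) \<and> g \<longlonglongrightarrow> 0"
proof (intro exI conjI allI impI)
  have "(\<lambda>k. x (Suc k) - x k) \<longlonglongrightarrow> 0"
    using gauss_seidel_step_descent[OF symA split B C steps proper diagC] \<open>\<delta> > 0\<close> bounded \<open>m \<noteq> -\<infinity>\<close>
    by (intro sufficient_decrease_steps_tendsto_zero[where c="\<delta>/2"]) simp_all
  then have "(\<lambda>k. C *v (x (Suc k) - x k)) \<longlonglongrightarrow> 0"
    using bounded_linear.tendsto[OF matrix_vector_mul_bounded_linear] by fastforce
  then show "(\<lambda>k. C *v (x k - x (k - 1))) \<longlonglongrightarrow> 0"
    by (intro LIMSEQ_imp_Suc[where f="\<lambda>k. C *v (x k - x (k - 1))"]) simp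
next
  fix k :: nat
  assume "k \<ge> 1"
  then obtain l where k: "k = Suc l" by (cases k) auto
  have eq: "C *v (x (Suc l) - x l) - (A *v x (Suc l) + b) = - (B *v x (Suc l) + C *v x l + b)"
    unfolding split by (simp add: matrix_vector_mult_add_rdistrib matrix_vector_mult_diff_distrib)
  have "- (B *v x (Suc l) + C *v x l + b) \<in> frechet_subdiff (sepfun phi) (x (Suc l))"
    by (rule gauss_seidel_step_subgradient[OF B steps proper])
  then show "C *v (x k - x (k - 1)) - (A *v x k + b) \<in> limiting_subdiff (sepfun phi) (x k)"
    unfolding k diff_Suc_1 eq using frechet_subdiff_subset_limiting_subdiff by blast
qed

definition sor_B ::
    "real^('n::{finite,linorder})^('n::{finite,linorder}) \<Rightarrow> real \<Rightarrow> real
     \<Rightarrow> real^('n::{finite,linorder})^('n::{finite,linorder})" where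
  "sor_B A \<omega> \<theta> = lowpart A + (1/\<omega>) *\<^sub>R (diagpart A + \<theta> *\<^sub>R mat 1)"

definition sor_C ::
    "real^('n::{finite,linorder})^('n::{finite,linorder}) \<Rightarrow> real \<Rightarrow> real
     \<Rightarrow> real^('n::{finite,linorder})^('n::{finite,linorder})" where
  "sor_C A \<omega> \<theta> = transpose (lowpart A) + (1/\<omega>) *\<^sub>R ((\<omega> - 1) *\<^sub>R diagpart A - \<theta> *\<^sub>R mat 1)"

lemma lower_triangular_sor_B: "lower_triangular (sor_B A \<omega> \<theta>)"
  by (auto simp: lower_triangular_def sor_B_def lowpart_def diagpart_def mat_def)

lemma upper_triangular_sor_C: "upper_triangular (sor_C A \<omega> \<theta>)"
  by (auto simp: upper_triangular_def sor_C_def lowpart_def diagpart_def mat_def transpose_def)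

lemma sor_C_diag: "sor_C A \<omega> \<theta> $j$j = - (\<theta> / \<omega> + (1 - \<omega>) / \<omega> * A$j$j)"
  by (simp add: sor_C_def lowpart_def diagpart_def mat_def transpose_def field_simps)

lemma sor_B_add_sor_C:
  assumes "transpose A = A" "\<omega> \<noteq> 0"
  shows "sor_B A \<omega> \<theta> + sor_C A \<omega> \<theta> = A"
proof -
  have "A$i$j = A$j$i" for i j
    by (metis assms(1) transpose_def vec_lambda_beta)
  then show ?thesis
    using assms(2) less_linear
    by (fastforce simp: vec_eq_iff sor_B_def sor_C_def lowpart_def diagpart_def mat_def
        transpose_def field_simps)
qed

theorem theorem4:
  fixes A :: "real^('n::{finite,linorder})^('n::{finite,linorder})" and b :: "real^('n::{finite,linorder})"
    and phi :: "real \<Rightarrow> ereal" and \<omega> \<theta> :: real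
    and x :: "nat \<Rightarrow> real^('n::{finite,linorder})"
  assumes symA: "transpose A = A"
    and psdA: "\<forall>v. v \<bullet> (A *v v) \<ge> 0"
    and proper: "proper_fun phi"
    and lsc: "lsc_fun phi"
    and attains: "\<exists>xs. \<forall>y. objf A b phi xs \<le> objf A b phi y"
    and omega: "0 < \<omega>" "\<omega> < 2"
    and theta: "\<theta> \<ge> 0"
    and delta_pos: "Min (range (\<lambda>i. \<theta> / \<omega> + (1 - \<omega>) / \<omega> * A$i$i)) > 0"
    and iter: "\<And>k j t.
      (let B = lowpart A + (1/\<omega>) *\<^sub>R (diagpart A + \<theta> *\<^sub>R mat 1);
           C = transpose (lowpart A) + (1/\<omega>) *\<^sub>R ((\<omega> - 1) *\<^sub>R diagpart A - \<theta> *\<^sub>R mat 1);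
           u = b + C *v x k;
           q = (\<lambda>s. 1/2 * B$j$j * s\<^sup>2 + (u$j + (\<Sum>i\<in>{i. i < j}. B$j$i * x (Suc k)$i)) * s)
       in ereal (q (x (Suc k)$j)) + phi (x (Suc k)$j) \<le> ereal (q t) + phi t)"
  shows "(\<forall>k. objf A b phi (x (Suc k)) - objf A b phi (x k)
              \<le> ereal (- (Min (range (\<lambda>i. \<theta> / \<omega> + (1 - \<omega>) / \<omega> * A$i$i))) / 2
                        * (norm (x (Suc k) - x k))\<^sup>2)
          \<and> - (Min (range (\<lambda>i. \<theta> / \<omega> + (1 - \<omega>) / \<omega> * A$i$i))) / 2
                        * (norm (x (Suc k) - x k))\<^sup>2 \<le> 0)
      \<and> (\<exists>g :: nat \<Rightarrow> real^('n::{finite,linorder}).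
          (\<forall>k\<ge>1. g k - (A *v x k + b) \<in> limiting_subdiff (sepfun phi) (x k))
          \<and> g \<longlonglongrightarrow> 0)"
proof -
  define \<delta> where "\<delta> = Min (range (\<lambda>i. \<theta> / \<omega> + (1 - \<omega>) / \<omega> * A$i$i))"
  define B where "B = sor_B A \<omega> \<theta>"
  define C where "C = sor_C A \<omega> \<theta>"
  have split: "A = B + C"
    using sor_B_add_sor_C[OF symA] omega unfolding B_def C_def by simp
  have B: "lower_triangular B" and C: "upper_triangular C"
    unfolding B_def C_def by (rule lower_triangular_sor_B upper_triangular_sor_C)+
  have steps: "gauss_seidel_step B C b phi (x k) (x (Suc k))" for k
    using iter unfolding gauss_seidel_step_def coord_quad_def B_def C_def sor_B_def sor_C_def Let_def
    by blast
  have diagC: "C$j$j \<le> - \<delta>" for j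
  proof -
    have "\<delta> \<le> \<theta> / \<omega> + (1 - \<omega>) / \<omega> * A$j$j"
      unfolding \<delta>_def by (rule Min_le) auto
    then show ?thesis
      unfolding C_def sor_C_diag by linarith
  qed
  obtain xmin where xmin: "\<And>y. objf A b phi xmin \<le> objf A b phi y"
    using attains by blast
  have "\<delta> > 0"
    using delta_pos unfolding \<delta>_def .
  then show ?thesis
    unfolding \<delta>_def[symmetric]
    using gauss_seidel_step_descent[OF symA split B C steps proper diagC]
      gauss_seidel_subgradients_tendsto_zero[where x=x, OF symA split B C steps proper diagC _ xmin
        objf_neq_MInfty[OF proper, of A b xmin]]
    by simp
qed

end
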